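(* Let $X$ be a regular topological space. The following are equivalent: (a) $X$ is locally compact (every point has a compact neighborhood); (b) the quantale $\mathcal{O}(X)$ is blooming; (c) the m-filter $\{X\}\in\operatorname{mF}(\mathcal{O}(X))$ is locally solid.
   Context: $\mathcal{O}(X)$ is the quantale of open subsets of $X$, ordered by inclusion, with join = union, multiplication = intersection, top $X$. For a quantale $Q$ (poset with all nonempty joins, top $1$, commutative associative unital multiplication distributing over nonempty joins): an m-filter is a subset containing $1$, upward closed, closed under multiplication. Suspension: order nonempty subsets of $Q$ by $S\le T$ iff each $s\in S$ is below the join of finitely many elements of $T$; $\Sigma Q$ is the poset of equivalence classes with multiplication $S\cdot T=\{st\}$; $\sigma_Q:\Sigma Q\to Q$, $S\mapsto\sum S$. $Q$ is blooming if $\sigma_Q$ has a left adjoint $\sigma_Q^\flat$ (order-preserving with $\sigma_Q^\flat(x)\le S\iff x\le\sigma_Q(S)$) and $\sigma_Q^\flat(ab)=\sigma_Q^\flat(a)\cdot\sigma_Q^\flat(b)$ for all $a,b$. An m-filter $\mathcal{F}$ is locally solid if there is a nonempty $W\subseteq Q$ with $\sum W=1$ such that for every $w\in W$ and every nonempty family $(x_i)_{i\in I}$ with $\sum_ix_i\in\mathcal{F}$ there exist $t\in\mathcal{F}$ and a finite nonempty $I_0\subseteq I$ with $tw\le\sum_{i\in I_0}x_i$. *)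

theory Defs
  imports "HOL-Analysis.Analysis"
begin

text \<open>A quantale is presented by its carrier Q, order le, join operator J
(defined on nonempty subsets), multiplication mul and top element topq.
The elements of the suspension Sigma Q are equivalence classes of nonempty
subsets of Q; we work with representatives and the preorder susp_le.\<close>

definition susp_le ::
  "('q \<Rightarrow> 'q \<Rightarrow> bool) \<Rightarrow> ('q set \<Rightarrow> 'q) \<Rightarrow> 'q set \<Rightarrow> 'q set \<Rightarrow> bool" where
  "susp_le le J S T \<longleftrightarrow>
     (\<forall>s\<in>S. \<exists>F. finite F \<and> F \<noteq> {} \<and> F \<subseteq> T \<and> le s (J F))"

definition susp_eq ::
  "('q \<Rightarrow> 'q \<Rightarrow> bool) \<Rightarrow> ('q set \<Rightarrow> 'q) \<Rightarrow> 'q set \<Rightarrow> 'q set \<Rightarrow> bool" where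
  "susp_eq le J S T \<longleftrightarrow> susp_le le J S T \<and> susp_le le J T S"

definition set_mult :: "('q \<Rightarrow> 'q \<Rightarrow> 'q) \<Rightarrow> 'q set \<Rightarrow> 'q set \<Rightarrow> 'q set" where
  "set_mult mul S T = {mul s t | s t. s \<in> S \<and> t \<in> T}"

text \<open>sigma_Q sends (the class of) S to J S. Blooming: sigma_Q has a left adjoint
(given by representatives f x, well defined up to susp_eq) that preserves
multiplication.\<close>

definition blooming ::
  "'q set \<Rightarrow> ('q \<Rightarrow> 'q \<Rightarrow> bool) \<Rightarrow> ('q set \<Rightarrow> 'q) \<Rightarrow> ('q \<Rightarrow> 'q \<Rightarrow> 'q) \<Rightarrow> bool" where
  "blooming Q le J mul \<longleftrightarrow>
     (\<exists>f. (\<forall>x\<in>Q. f x \<noteq> {} \<and> f x \<subseteq> Q)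
        \<and> (\<forall>x\<in>Q. \<forall>y\<in>Q. le x y \<longrightarrow> susp_le le J (f x) (f y))
        \<and> (\<forall>x\<in>Q. \<forall>S. S \<noteq> {} \<and> S \<subseteq> Q \<longrightarrow> (susp_le le J (f x) S \<longleftrightarrow> le x (J S)))
        \<and> (\<forall>a\<in>Q. \<forall>b\<in>Q. susp_eq le J (f (mul a b)) (set_mult mul (f a) (f b))))"

definition m_filter ::
  "'q set \<Rightarrow> ('q \<Rightarrow> 'q \<Rightarrow> bool) \<Rightarrow> ('q \<Rightarrow> 'q \<Rightarrow> 'q) \<Rightarrow> 'q \<Rightarrow> 'q set \<Rightarrow> bool" where
  "m_filter Q le mul topq F \<longleftrightarrow>
     F \<subseteq> Q \<and> topq \<in> F
     \<and> (\<forall>x\<in>F. \<forall>y\<in>Q. le x y \<longrightarrow> y \<in> F)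
     \<and> (\<forall>x\<in>F. \<forall>y\<in>F. mul x y \<in> F)"

text \<open>Families (x_i) are represented by the set of their members; this is
harmless since only joins of subfamilies matter.\<close>

definition locally_solid ::
  "'q set \<Rightarrow> ('q \<Rightarrow> 'q \<Rightarrow> bool) \<Rightarrow> ('q set \<Rightarrow> 'q) \<Rightarrow> ('q \<Rightarrow> 'q \<Rightarrow> 'q) \<Rightarrow> 'q \<Rightarrow> 'q set \<Rightarrow> bool" where
  "locally_solid Q le J mul topq F \<longleftrightarrow>
     m_filter Q le mul topq F \<and>
     (\<exists>W. W \<noteq> {} \<and> W \<subseteq> Q \<and> J W = topq \<and>
        (\<forall>w\<in>W. \<forall>A. A \<noteq> {} \<and> A \<subseteq> Q \<and> J A \<in> F \<longrightarrow>
           (\<exists>t\<in>F. \<exists>A0. finite A0 \<and> A0 \<noteq> {} \<and> A0 \<subseteq> A \<and> le (mul t w) (J A0))))"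

definition opens :: "'a topology \<Rightarrow> 'a set set" where
  "opens X = {U. openin X U}"

end

theory Submission
  imports Defs
begin

text \<open>The left adjoint of \<open>\<sigma>\<close> sends an open set \<open>x\<close> to the family of open sets \<open>V\<close>
with \<open>V \<subseteq> K \<subseteq> x\<close> for some compact closed \<open>K\<close>: compactness of \<open>K\<close> makes this family
finitely refine every open cover of \<open>x\<close>, local compactness together with regularity makes it
cover \<open>x\<close>, and since \<open>K \<inter> L\<close> is again compact and closed it is multiplicative.
Conversely, the image of the whole space under the left adjoint is an open cover of \<open>X\<close> by sets
that are way below \<open>X\<close> (every open cover of \<open>X\<close> covers them finitely), and this is exactly
what local solidity of \<open>{X}\<close> amounts to. In a regular space such a set \<open>w\<close> has compact closure:
given an open cover of \<open>X closure_of w\<close>, the open sets whose closures lie in one of its members,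
together with the complement of \<open>X closure_of w\<close>, cover \<open>X\<close>; finitely many of them cover \<open>w\<close>,
and their closures then cover \<open>X closure_of w\<close>.\<close>

lemma susp_le_Union_iff:
  assumes "T \<noteq> {}"
  shows "susp_le (\<subseteq>) Union S T \<longleftrightarrow> (\<forall>s\<in>S. \<exists>F. finite F \<and> F \<subseteq> T \<and> s \<subseteq> \<Union>F)"
  unfolding susp_le_def
proof (intro iffI ballI)
  fix s assume "\<forall>s\<in>S. \<exists>F. finite F \<and> F \<noteq> {} \<and> F \<subseteq> T \<and> s \<subseteq> \<Union>F" "s \<in> S"
  then have "\<exists>F. finite F \<and> F \<noteq> {} \<and> F \<subseteq> T \<and> s \<subseteq> \<Union>F" by (rule bspec)
  then obtain F where "finite F" "F \<subseteq> T" "s \<subseteq> \<Union>F" by blast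
  then show "\<exists>F. finite F \<and> F \<subseteq> T \<and> s \<subseteq> \<Union>F" by (intro exI[of _ F] conjI)
next
  fix s assume "\<forall>s\<in>S. \<exists>F. finite F \<and> F \<subseteq> T \<and> s \<subseteq> \<Union>F" "s \<in> S"
  then have "\<exists>F. finite F \<and> F \<subseteq> T \<and> s \<subseteq> \<Union>F" by (rule bspec)
  then obtain F where "finite F" "F \<subseteq> T" "s \<subseteq> \<Union>F" by blast
  moreover obtain t where "t \<in> T" using assms by blast
  ultimately show "\<exists>F. finite F \<and> F \<noteq> {} \<and> F \<subseteq> T \<and> s \<subseteq> \<Union>F"
    by (intro exI[of _ "insert t F"] conjI) auto
qed

lemma susp_le_refinement:
  assumes "\<forall>s\<in>S. \<exists>t\<in>T. s \<subseteq> t"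
  shows "susp_le (\<subseteq>) Union S T"
  unfolding susp_le_def
proof
  fix s assume "s \<in> S"
  then obtain t where "t \<in> T" "s \<subseteq> t" using assms by blast
  then show "\<exists>F. finite F \<and> F \<noteq> {} \<and> F \<subseteq> T \<and> s \<subseteq> \<Union>F"
    by (intro exI[of _ "{t}"]) auto
qed

lemma susp_le_refl: "susp_le (\<subseteq>) Union S S"
  by (rule susp_le_refinement) blast

lemma susp_le_imp_Union_subset:
  assumes "susp_le (\<subseteq>) Union S T"
  shows "\<Union>S \<subseteq> \<Union>T"
  using assms unfolding susp_le_def by blast

lemma m_filter_opens_topspace: "m_filter (opens X) (\<subseteq>) (\<inter>) (topspace X) {topspace X}"
  unfolding m_filter_def opens_def by (auto dest: openin_subset)

definition way_below_topspace :: "'a topology \<Rightarrow> 'a set \<Rightarrow> bool" where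
  "way_below_topspace X w \<longleftrightarrow>
     (\<forall>\<U>. (\<forall>U\<in>\<U>. openin X U) \<and> topspace X \<subseteq> \<Union>\<U> \<longrightarrow>
        (\<exists>\<F>. finite \<F> \<and> \<F> \<subseteq> \<U> \<and> w \<subseteq> \<Union>\<F>))"

lemma way_below_topspaceI:
  assumes "\<And>\<U>. \<forall>U\<in>\<U>. openin X U \<Longrightarrow> topspace X \<subseteq> \<Union>\<U> \<Longrightarrow>
             \<exists>\<F>. finite \<F> \<and> \<F> \<subseteq> \<U> \<and> w \<subseteq> \<Union>\<F>"
  shows "way_below_topspace X w"
  unfolding way_below_topspace_def by (intro allI impI, elim conjE) (rule assms)

lemma way_below_topspaceD:
  assumes "way_below_topspace X w" "\<forall>U\<in>\<U>. openin X U" "topspace X \<subseteq> \<Union>\<U>"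
  shows "\<exists>\<F>. finite \<F> \<and> \<F> \<subseteq> \<U> \<and> w \<subseteq> \<Union>\<F>"
  using assms unfolding way_below_topspace_def by metis

lemma way_below_topspace_imp_subset:
  assumes "way_below_topspace X w"
  shows "w \<subseteq> topspace X"
proof -
  have "\<exists>\<F>. finite \<F> \<and> \<F> \<subseteq> {topspace X} \<and> w \<subseteq> \<Union>\<F>"
    by (rule way_below_topspaceD[OF assms]) simp_all
  then show ?thesis by blast
qed

lemma way_below_topspace_empty: "way_below_topspace X {}"
  by (rule way_below_topspaceI) (intro exI[of _ "{}"], simp)

lemma way_below_cover_if_locally_solid:
  assumes "locally_solid (opens X) (\<subseteq>) Union (\<inter>) (topspace X) {topspace X}"
  shows "\<exists>W \<subseteq> opens X. topspace X \<subseteq> \<Union>W \<and> (\<forall>w\<in>W. way_below_topspace X w)"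
proof -
  obtain W where W: "W \<subseteq> opens X" "\<Union>W = topspace X"
    and finite_cover: "\<forall>w\<in>W. \<forall>A. A \<noteq> {} \<and> A \<subseteq> opens X \<and> \<Union>A \<in> {topspace X} \<longrightarrow>
           (\<exists>t\<in>{topspace X}. \<exists>A0. finite A0 \<and> A0 \<noteq> {} \<and> A0 \<subseteq> A \<and> t \<inter> w \<subseteq> \<Union>A0)"
    using assms unfolding locally_solid_def by (elim exE conjE) (rule that)
  have "way_below_topspace X w" if "w \<in> W" for w
  proof (rule way_below_topspaceI)
    fix \<U> assume \<U>: "\<forall>U\<in>\<U>. openin X U" "topspace X \<subseteq> \<Union>\<U>"
    have "w \<subseteq> topspace X" using W \<open>w \<in> W\<close> by blast
    show "\<exists>\<F>. finite \<F> \<and> \<F> \<subseteq> \<U> \<and> w \<subseteq> \<Union>\<F>"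
    proof (cases "\<U> = {}")
      case True
      then show ?thesis using \<U>(2) \<open>w \<subseteq> topspace X\<close> by (intro exI[of _ "{}"]) auto
    next
      case False
      moreover have "\<U> \<subseteq> opens X" using \<U>(1) by (auto simp: opens_def)
      moreover have "\<Union>\<U> \<in> {topspace X}" using \<U> by (auto dest: openin_subset)
      ultimately have "\<exists>t\<in>{topspace X}. \<exists>A0. finite A0 \<and> A0 \<noteq> {} \<and> A0 \<subseteq> \<U> \<and> t \<inter> w \<subseteq> \<Union>A0"
        using finite_cover \<open>w \<in> W\<close> by simp
      then obtain A0 where "finite A0" "A0 \<subseteq> \<U>" "topspace X \<inter> w \<subseteq> \<Union>A0"
        by blast
      then show ?thesis using \<open>w \<subseteq> topspace X\<close> by (intro exI[of _ A0] conjI) auto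
    qed
  qed
  then show ?thesis using W by (intro exI[of _ W]) auto
qed

lemma locally_solid_if_way_below_cover:
  assumes "W \<subseteq> opens X" "topspace X \<subseteq> \<Union>W" "\<forall>w\<in>W. way_below_topspace X w"
  shows "locally_solid (opens X) (\<subseteq>) Union (\<inter>) (topspace X) {topspace X}"
proof -
  \<comment> \<open>locally_solid demands a nonempty W, so the empty space needs the extra member {}.\<close>
  let ?W = "insert {} W"
  have finite_cover: "\<forall>w\<in>?W. \<forall>A. A \<noteq> {} \<and> A \<subseteq> opens X \<and> \<Union>A \<in> {topspace X} \<longrightarrow>
           (\<exists>t\<in>{topspace X}. \<exists>A0. finite A0 \<and> A0 \<noteq> {} \<and> A0 \<subseteq> A \<and> t \<inter> w \<subseteq> \<Union>A0)"
  proof (intro ballI allI impI)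
    fix w A assume w: "w \<in> ?W" and A: "A \<noteq> {} \<and> A \<subseteq> opens X \<and> \<Union>A \<in> {topspace X}"
    have "way_below_topspace X w" using assms(3) w way_below_topspace_empty by blast
    moreover have "\<forall>U\<in>A. openin X U" using A by (auto simp: opens_def)
    moreover have "topspace X \<subseteq> \<Union>A" using A by simp
    ultimately have "\<exists>\<F>. finite \<F> \<and> \<F> \<subseteq> A \<and> w \<subseteq> \<Union>\<F>" by (rule way_below_topspaceD)
    then obtain \<F> where "finite \<F>" "\<F> \<subseteq> A" "w \<subseteq> \<Union>\<F>" by blast
    moreover obtain a where "a \<in> A" using A by blast
    ultimately show "\<exists>t\<in>{topspace X}. \<exists>A0. finite A0 \<and> A0 \<noteq> {} \<and> A0 \<subseteq> A \<and> t \<inter> w \<subseteq> \<Union>A0"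
      by (intro bexI[of _ "topspace X"] exI[of _ "insert a \<F>"] conjI) auto
  qed
  moreover have "?W \<noteq> {}" "?W \<subseteq> opens X" "\<Union>?W = topspace X"
    using assms(1,2) by (auto simp: opens_def dest: openin_subset)
  ultimately show ?thesis
    unfolding locally_solid_def using m_filter_opens_topspace by (intro conjI exI[of _ ?W])
qed

lemma way_below_cover_if_blooming:
  assumes "blooming (opens X) (\<subseteq>) Union (\<inter>)"
  shows "\<exists>W \<subseteq> opens X. topspace X \<subseteq> \<Union>W \<and> (\<forall>w\<in>W. way_below_topspace X w)"
proof -
  obtain f where f_opens: "\<forall>x\<in>opens X. f x \<noteq> {} \<and> f x \<subseteq> opens X"
    and f_adjoint: "\<forall>x\<in>opens X. \<forall>S. S \<noteq> {} \<and> S \<subseteq> opens X \<longrightarrow>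
                      (susp_le (\<subseteq>) Union (f x) S \<longleftrightarrow> x \<subseteq> \<Union>S)"
    using assms unfolding blooming_def by (elim exE conjE) (rule that)
  have top: "topspace X \<in> opens X" by (simp add: opens_def)
  let ?W = "f (topspace X)"
  have W: "?W \<noteq> {}" "?W \<subseteq> opens X" using f_opens top by auto
  have adjoint: "susp_le (\<subseteq>) Union ?W S \<longleftrightarrow> topspace X \<subseteq> \<Union>S"
    if "S \<noteq> {}" "S \<subseteq> opens X" for S
    by (rule f_adjoint[rule_format, OF top conjI[OF that]])
  have "topspace X \<subseteq> \<Union>?W"
    using adjoint[OF W] susp_le_refl by blast
  moreover have "way_below_topspace X w" if "w \<in> ?W" for w
  proof (rule way_below_topspaceI)
    fix \<U> assume \<U>: "\<forall>U\<in>\<U>. openin X U" "topspace X \<subseteq> \<Union>\<U>"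
    show "\<exists>\<F>. finite \<F> \<and> \<F> \<subseteq> \<U> \<and> w \<subseteq> \<Union>\<F>"
    proof (cases "\<U> = {}")
      case True
      have "w \<subseteq> topspace X" using \<open>w \<in> ?W\<close> W(2) by (auto simp: opens_def dest: openin_subset)
      then show ?thesis using True \<U>(2) by (intro exI[of _ "{}"]) auto
    next
      case False
      have "\<U> \<subseteq> opens X" using \<U>(1) by (auto simp: opens_def)
      then have "susp_le (\<subseteq>) Union ?W \<U>"
        using adjoint[OF False] \<U>(2) by simp
      then have "\<forall>s\<in>?W. \<exists>\<F>. finite \<F> \<and> \<F> \<subseteq> \<U> \<and> s \<subseteq> \<Union>\<F>"
        by (simp add: susp_le_Union_iff[OF False])
      then show ?thesis using \<open>w \<in> ?W\<close> by (rule bspec)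
    qed
  qed
  ultimately show ?thesis using W(2) by (intro exI[of _ ?W] conjI) blast+
qed

lemma Union_subset_Union_opens_with_closure_inside:
  assumes "regular_space X" "\<forall>U\<in>\<U>. openin X U"
  shows "\<Union>\<U> \<subseteq> \<Union>{V. openin X V \<and> (\<exists>U\<in>\<U>. X closure_of V \<subseteq> U)}"
proof
  have base: "neighbourhood_base_of (closedin X) X"
    using assms(1) by (simp add: neighbourhood_base_of_closedin)
  fix x assume "x \<in> \<Union>\<U>"
  then obtain U where "U \<in> \<U>" "x \<in> U" by blast
  then have "openin X U" using assms(2) by blast
  obtain V K where "openin X V" "closedin X K" "x \<in> V" "V \<subseteq> K" "K \<subseteq> U"
    using base[unfolded neighbourhood_base_of, rule_format, OF conjI[OF \<open>openin X U\<close> \<open>x \<in> U\<close>]]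
    by (elim exE conjE) (rule that)
  then have "X closure_of V \<subseteq> U" by (meson closure_of_minimal subset_trans)
  with \<open>openin X V\<close> \<open>x \<in> V\<close> \<open>U \<in> \<U>\<close>
  show "x \<in> \<Union>{V. openin X V \<and> (\<exists>U\<in>\<U>. X closure_of V \<subseteq> U)}"
    by blast
qed

lemma way_below_topspace_shrunk_finite_cover:
  assumes "regular_space X" "way_below_topspace X w"
    and "\<forall>U\<in>\<U>. openin X U" "X closure_of w \<subseteq> \<Union>\<U>"
  shows "\<exists>\<G>. finite \<G> \<and> (\<forall>V\<in>\<G>. \<exists>U\<in>\<U>. X closure_of V \<subseteq> U) \<and> w \<subseteq> \<Union>\<G>"
proof -
  define \<V> where "\<V> = {V. openin X V \<and> (\<exists>U\<in>\<U>. X closure_of V \<subseteq> U)}"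
  let ?C = "topspace X - X closure_of w"
  have "w \<subseteq> X closure_of w"
    using assms(2) by (intro closure_of_subset way_below_topspace_imp_subset)
  have "\<Union>\<U> \<subseteq> \<Union>\<V>"
    unfolding \<V>_def by (rule Union_subset_Union_opens_with_closure_inside[OF assms(1,3)])
  then have "topspace X \<subseteq> ?C \<union> \<Union>\<V>"
    using assms(4) by blast
  then have "topspace X \<subseteq> \<Union>(insert ?C \<V>)"
    by simp
  moreover have "\<forall>V\<in>insert ?C \<V>. openin X V"
    by (auto simp: \<V>_def)
  ultimately have "\<exists>\<F>. finite \<F> \<and> \<F> \<subseteq> insert ?C \<V> \<and> w \<subseteq> \<Union>\<F>"
    by (intro way_below_topspaceD[OF assms(2)])
  then obtain \<F> where \<F>: "finite \<F>" "\<F> \<subseteq> insert ?C \<V>" "w \<subseteq> \<Union>\<F>"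
    by blast
  have "w \<subseteq> \<Union>(\<F> - {?C})"
  proof
    fix p assume "p \<in> w"
    then obtain V where "V \<in> \<F>" "p \<in> V" using \<F>(3) by blast
    moreover have "p \<notin> ?C" using \<open>p \<in> w\<close> \<open>w \<subseteq> X closure_of w\<close> by blast
    ultimately show "p \<in> \<Union>(\<F> - {?C})" by (intro UnionI[of V]) auto
  qed
  moreover have "\<forall>V\<in>\<F> - {?C}. \<exists>U\<in>\<U>. X closure_of V \<subseteq> U"
  proof
    fix V assume "V \<in> \<F> - {?C}"
    with \<F>(2) have "V \<in> \<V>" by blast
    then show "\<exists>U\<in>\<U>. X closure_of V \<subseteq> U" by (simp add: \<V>_def)
  qed
  ultimately show ?thesis
    using \<F>(1) by (intro exI[of _ "\<F> - {?C}"] conjI) simp_all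
qed

lemma compactin_closure_of_way_below_topspace:
  assumes "regular_space X" "way_below_topspace X w"
  shows "compactin X (X closure_of w)"
  unfolding compactin_def
proof (intro conjI allI impI closure_of_subset_topspace)
  fix \<U> assume \<U>: "(\<forall>U\<in>\<U>. openin X U) \<and> X closure_of w \<subseteq> \<Union>\<U>"
  then have "\<exists>\<G>. finite \<G> \<and> (\<forall>V\<in>\<G>. \<exists>U\<in>\<U>. X closure_of V \<subseteq> U) \<and> w \<subseteq> \<Union>\<G>"
    using way_below_topspace_shrunk_finite_cover[OF assms] by simp
  then obtain \<G> where \<G>: "finite \<G>" "\<forall>V\<in>\<G>. \<exists>U\<in>\<U>. X closure_of V \<subseteq> U" "w \<subseteq> \<Union>\<G>"
    by blast
  then obtain g where g: "\<forall>V\<in>\<G>. g V \<in> \<U> \<and> X closure_of V \<subseteq> g V"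
    by metis
  have "X closure_of w \<subseteq> X closure_of \<Union>\<G>"
    using \<G>(3) by (rule closure_of_mono)
  also have "\<dots> = (\<Union>V\<in>\<G>. X closure_of V)"
    using \<G>(1) by (simp add: closure_of_Union)
  also have "\<dots> \<subseteq> \<Union>(g ` \<G>)"
    using g by (intro UN_least) auto
  finally show "\<exists>\<F>. finite \<F> \<and> \<F> \<subseteq> \<U> \<and> X closure_of w \<subseteq> \<Union>\<F>"
    using g \<G>(1) by (intro exI[of _ "g ` \<G>"]) auto
qed

lemma locally_compact_space_if_way_below_cover:
  assumes "regular_space X" "W \<subseteq> opens X" "topspace X \<subseteq> \<Union>W"
    and "\<forall>w\<in>W. way_below_topspace X w"
  shows "locally_compact_space X"
  unfolding locally_compact_space_def
proof
  fix x assume "x \<in> topspace X"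
  then obtain w where "w \<in> W" "x \<in> w" using assms(3) by blast
  then have "openin X w" using assms(2) by (auto simp: opens_def)
  moreover have "compactin X (X closure_of w)"
    using assms(1,4) \<open>w \<in> W\<close> by (simp add: compactin_closure_of_way_below_topspace)
  moreover have "w \<subseteq> X closure_of w"
    using \<open>openin X w\<close> by (simp add: closure_of_subset openin_subset)
  ultimately show "\<exists>U K. openin X U \<and> compactin X K \<and> x \<in> U \<and> U \<subseteq> K"
    using \<open>x \<in> w\<close> by (intro exI[of _ w] exI[of _ "X closure_of w"] conjI)
qed

definition opens_compactly_inside :: "'a topology \<Rightarrow> 'a set \<Rightarrow> 'a set set" where
  "opens_compactly_inside X x =
     {V. openin X V \<and> (\<exists>K. compactin X K \<and> closedin X K \<and> V \<subseteq> K \<and> K \<subseteq> x)}"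

lemma opens_compactly_inside_mono:
  "x \<subseteq> y \<Longrightarrow> opens_compactly_inside X x \<subseteq> opens_compactly_inside X y"
  unfolding opens_compactly_inside_def by blast

lemma Union_opens_compactly_inside:
  assumes "locally_compact_space X" "regular_space X" "openin X x"
  shows "\<Union>(opens_compactly_inside X x) = x"
proof
  show "\<Union>(opens_compactly_inside X x) \<subseteq> x"
    unfolding opens_compactly_inside_def by blast
  have base: "neighbourhood_base_of (\<lambda>C. compactin X C \<and> closedin X C) X"
    using assms(1,2) locally_compact_regular_space_neighbourhood_base by blast
  show "x \<subseteq> \<Union>(opens_compactly_inside X x)"
  proof
    fix p assume "p \<in> x"
    obtain V K where "openin X V" "compactin X K" "closedin X K" "p \<in> V" "V \<subseteq> K" "K \<subseteq> x"
      using base[unfolded neighbourhood_base_of, rule_format, OF conjI[OF assms(3) \<open>p \<in> x\<close>]]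
      by (elim exE conjE) (rule that)
    then show "p \<in> \<Union>(opens_compactly_inside X x)"
      unfolding opens_compactly_inside_def by blast
  qed
qed

lemma susp_le_opens_compactly_inside_iff:
  assumes "locally_compact_space X" "regular_space X" "openin X x"
    and "S \<noteq> {}" "S \<subseteq> opens X"
  shows "susp_le (\<subseteq>) Union (opens_compactly_inside X x) S \<longleftrightarrow> x \<subseteq> \<Union>S"
proof
  assume "susp_le (\<subseteq>) Union (opens_compactly_inside X x) S"
  from susp_le_imp_Union_subset[OF this] show "x \<subseteq> \<Union>S"
    by (simp add: Union_opens_compactly_inside[OF assms(1-3)])
next
  assume "x \<subseteq> \<Union>S"
  show "susp_le (\<subseteq>) Union (opens_compactly_inside X x) S"
    unfolding susp_le_Union_iff[OF assms(4)]
  proof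
    fix V assume "V \<in> opens_compactly_inside X x"
    then obtain K where "compactin X K" "V \<subseteq> K" "K \<subseteq> x"
      unfolding opens_compactly_inside_def by blast
    moreover have "\<forall>U\<in>S. openin X U"
      using assms(5) by (auto simp: opens_def)
    moreover have "K \<subseteq> \<Union>S"
      using \<open>K \<subseteq> x\<close> \<open>x \<subseteq> \<Union>S\<close> by blast
    ultimately have "\<exists>\<F>. finite \<F> \<and> \<F> \<subseteq> S \<and> K \<subseteq> \<Union>\<F>"
      unfolding compactin_def by metis
    then obtain \<F> where "finite \<F>" "\<F> \<subseteq> S" "K \<subseteq> \<Union>\<F>"
      by blast
    then show "\<exists>\<F>. finite \<F> \<and> \<F> \<subseteq> S \<and> V \<subseteq> \<Union>\<F>"
      using \<open>V \<subseteq> K\<close> by (intro exI[of _ \<F>]) auto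
  qed
qed

lemma set_mult_opens_compactly_inside:
  "set_mult (\<inter>) (opens_compactly_inside X a) (opens_compactly_inside X b) =
     opens_compactly_inside X (a \<inter> b)"
proof
  show "set_mult (\<inter>) (opens_compactly_inside X a) (opens_compactly_inside X b)
          \<subseteq> opens_compactly_inside X (a \<inter> b)"
  proof
    fix r assume "r \<in> set_mult (\<inter>) (opens_compactly_inside X a) (opens_compactly_inside X b)"
    then obtain s t K L where "r = s \<inter> t"
      and K: "openin X s" "compactin X K" "closedin X K" "s \<subseteq> K" "K \<subseteq> a"
      and L: "openin X t" "compactin X L" "closedin X L" "t \<subseteq> L" "L \<subseteq> b"
      unfolding set_mult_def opens_compactly_inside_def by blast
    have "closedin X (K \<inter> L)"
      using K(3) L(3) by (rule closedin_Int)
    moreover have "compactin X (K \<inter> L)"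
      using K(2) Int_lower1 \<open>closedin X (K \<inter> L)\<close> by (rule closed_compactin)
    ultimately show "r \<in> opens_compactly_inside X (a \<inter> b)"
      unfolding opens_compactly_inside_def using \<open>r = s \<inter> t\<close> K L
      by (intro CollectI conjI exI[of _ "K \<inter> L"]) auto
  qed
  show "opens_compactly_inside X (a \<inter> b)
          \<subseteq> set_mult (\<inter>) (opens_compactly_inside X a) (opens_compactly_inside X b)"
  proof
    fix s assume "s \<in> opens_compactly_inside X (a \<inter> b)"
    then have "s \<in> opens_compactly_inside X a" "s \<in> opens_compactly_inside X b"
      using opens_compactly_inside_mono[of "a \<inter> b"] by blast+
    then show "s \<in> set_mult (\<inter>) (opens_compactly_inside X a) (opens_compactly_inside X b)"
      unfolding set_mult_def by (intro CollectI exI[of _ s] conjI) simp_all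
  qed
qed

lemma blooming_opens_if_locally_compact:
  assumes "locally_compact_space X" "regular_space X"
  shows "blooming (opens X) (\<subseteq>) Union (\<inter>)"
proof -
  let ?f = "opens_compactly_inside X"
  have f_opens: "\<forall>x\<in>opens X. ?f x \<noteq> {} \<and> ?f x \<subseteq> opens X"
  proof
    fix x
    have "{} \<in> ?f x"
      unfolding opens_compactly_inside_def by (intro CollectI conjI exI[of _ "{}"]) auto
    moreover have "?f x \<subseteq> opens X"
      unfolding opens_compactly_inside_def opens_def by blast
    ultimately show "?f x \<noteq> {} \<and> ?f x \<subseteq> opens X" by blast
  qed
  have f_mono: "\<forall>x\<in>opens X. \<forall>y\<in>opens X. x \<subseteq> y \<longrightarrow> susp_le (\<subseteq>) Union (?f x) (?f y)"
  proof (intro ballI impI susp_le_refinement)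
    fix x y s assume "x \<subseteq> y" "s \<in> ?f x"
    then show "\<exists>t\<in>?f y. s \<subseteq> t"
      using opens_compactly_inside_mono[OF \<open>x \<subseteq> y\<close>] by (intro bexI[of _ s]) auto
  qed
  have f_adjoint: "\<forall>x\<in>opens X. \<forall>S. S \<noteq> {} \<and> S \<subseteq> opens X \<longrightarrow>
                     (susp_le (\<subseteq>) Union (?f x) S \<longleftrightarrow> x \<subseteq> \<Union>S)"
  proof (intro ballI allI impI)
    fix x S assume "x \<in> opens X" and S: "S \<noteq> {} \<and> S \<subseteq> opens X"
    then have "openin X x" by (simp add: opens_def)
    from S have "S \<noteq> {}" "S \<subseteq> opens X" by simp_all
    then show "susp_le (\<subseteq>) Union (?f x) S \<longleftrightarrow> x \<subseteq> \<Union>S"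
      by (rule susp_le_opens_compactly_inside_iff[OF assms \<open>openin X x\<close>])
  qed
  have f_mult: "\<forall>a\<in>opens X. \<forall>b\<in>opens X.
                  susp_eq (\<subseteq>) Union (?f (a \<inter> b)) (set_mult (\<inter>) (?f a) (?f b))"
    by (simp add: set_mult_opens_compactly_inside susp_eq_def susp_le_refl)
  show ?thesis
    unfolding blooming_def using f_opens f_mono f_adjoint f_mult by (intro exI[of _ ?f] conjI)
qed

theorem mainTheorem10:
  fixes X :: "'a topology"
  assumes "regular_space X"
  shows "(locally_compact_space X \<longleftrightarrow> blooming (opens X) (\<subseteq>) Union (\<inter>))
       \<and> (blooming (opens X) (\<subseteq>) Union (\<inter>) \<longleftrightarrow>
            locally_solid (opens X) (\<subseteq>) Union (\<inter>) (topspace X) {topspace X})"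
proof -
  have "locally_compact_space X \<Longrightarrow> blooming (opens X) (\<subseteq>) Union (\<inter>)"
    using blooming_opens_if_locally_compact assms by blast
  moreover have "blooming (opens X) (\<subseteq>) Union (\<inter>) \<Longrightarrow>
      locally_solid (opens X) (\<subseteq>) Union (\<inter>) (topspace X) {topspace X}"
    using way_below_cover_if_blooming locally_solid_if_way_below_cover by blast
  moreover have "locally_solid (opens X) (\<subseteq>) Union (\<inter>) (topspace X) {topspace X} \<Longrightarrow>
      locally_compact_space X"
    using way_below_cover_if_locally_solid locally_compact_space_if_way_below_cover[OF assms]
    by blast
  ultimately show ?thesis by blast
qed

end
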